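(* Let $\sigma>0$, $\alpha>0$, $\eta>0$ and define the penalty $p(t)=(\alpha+1)\log(\sigma\eta+t)$ for $t\ge 0$. For $\hat\beta\in\mathbb{R}$ consider the penalized least squares problem $$\tilde\beta(\hat\beta)=\arg\min_{\beta\in\mathbb{R}}\left\{\tfrac12(\hat\beta-\beta)^2+\sigma^{2}p(|\beta|)\right\}.$$ If $\eta<2\sqrt{\alpha+1}$, then the resulting estimator is a thresholding rule: there exists $c>0$ such that for every $\hat\beta$ with $|\hat\beta|<c$ the minimizer is $\tilde\beta(\hat\beta)=0$.
   Context: This penalty is the part of $-\log\pi(\beta\mid\sigma)$ depending on $\beta$ under the generalized double Pareto prior $\beta\mid\sigma\sim\mathrm{GDP}(\xi=\sigma\eta/\alpha,\alpha)$, whose density is $\frac{1}{2\xi}(1+|\beta|/(\alpha\xi))^{-(\alpha+1)}$; the problem corresponds to a single coordinate of penalized least squares with an orthonormal design, where $\hat\beta=\mathbf{x}_j'\mathbf{y}$. *)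

theory Defs
  imports Complex_Main
begin

definition gdp_pen :: "real \<Rightarrow> real \<Rightarrow> real \<Rightarrow> real \<Rightarrow> real" where
  "gdp_pen \<sigma> \<alpha> \<eta> t = (\<alpha> + 1) * ln (\<sigma> * \<eta> + t)"

definition gdp_obj :: "real \<Rightarrow> real \<Rightarrow> real \<Rightarrow> real \<Rightarrow> real \<Rightarrow> real" where
  "gdp_obj \<sigma> \<alpha> \<eta> bhat \<beta> = (1/2) * (bhat - \<beta>)^2 + \<sigma>^2 * gdp_pen \<sigma> \<alpha> \<eta> \<bar>\<beta>\<bar>"

definition gdp_argmin :: "real \<Rightarrow> real \<Rightarrow> real \<Rightarrow> real \<Rightarrow> real set" where
  "gdp_argmin \<sigma> \<alpha> \<eta> bhat =
     {\<beta>. \<forall>\<gamma>. gdp_obj \<sigma> \<alpha> \<eta> bhat \<beta> \<le> gdp_obj \<sigma> \<alpha> \<eta> bhat \<gamma>}"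

end

theory Submission
  imports Defs
begin

text \<open>For small \<open>|bhat|\<close> the origin is the strict global minimiser. Since
  \<open>ln (k + t) - ln k \<ge> t / (k + t)\<close>, moving from \<open>0\<close> to \<open>\<beta> \<noteq> 0\<close> changes the
  objective by at least \<open>|\<beta>| (|\<beta>|/2 + A/(k + |\<beta>|) - |bhat|)\<close> with
  \<open>k = \<sigma>\<eta>\<close>, \<open>A = \<sigma>\<^sup>2(\<alpha>+1)\<close>; the bracket is positive once
  \<open>|bhat| < min (k/2) (A/(2k))\<close>, distinguishing \<open>|\<beta>| \<le> k\<close> from \<open>|\<beta>| > k\<close>.\<close>

lemma ln_add_diff_ge:
  fixes k t :: real
  assumes "k > 0" and "t \<ge> 0"
  shows "t / (k + t) \<le> ln (k + t) - ln k"
proof -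
  have "ln (k / (k + t)) \<le> k / (k + t) - 1"
    using assms by (intro ln_le_minus_one) auto
  moreover have "ln (k / (k + t)) = ln k - ln (k + t)"
    using assms by (simp add: ln_div)
  moreover have "k / (k + t) - 1 = - (t / (k + t))"
    using assms by (simp add: field_simps)
  ultimately show ?thesis by linarith
qed

lemma log_penalty_increment_pos:
  fixes k A t b :: real
  assumes k: "k > 0" and A: "A > 0" and t: "t > 0"
    and b: "\<bar>b\<bar> < min (k / 2) (A / (2 * k))"
  shows "t\<^sup>2 / 2 - \<bar>b\<bar> * t + A * (ln (k + t) - ln k) > 0"
proof -
  have slope: "\<bar>b\<bar> < t / 2 + A / (k + t)"
  proof (cases "t \<le> k")
    case True
    then have "A / (2 * k) \<le> A / (k + t)"
      using k t A by (intro divide_left_mono) auto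
    then show ?thesis using b t by linarith
  next
    case False
    have "A / (k + t) > 0" using A k t by simp
    then show ?thesis using b False by linarith
  qed
  have "t * \<bar>b\<bar> < t * (t / 2 + A / (k + t))"
    using slope t by simp
  also have "\<dots> = t\<^sup>2 / 2 + A * (t / (k + t))"
    using k t by (simp add: field_simps power2_eq_square)
  also have "\<dots> \<le> t\<^sup>2 / 2 + A * (ln (k + t) - ln k)"
    using ln_add_diff_ge[of k t] k t A by (intro add_left_mono mult_left_mono) auto
  finally show ?thesis by (simp add: algebra_simps)
qed

lemma gdp_obj_zero_strict_min:
  fixes \<sigma> \<alpha> \<eta> b \<beta> :: real
  assumes "\<sigma> > 0" and "\<alpha> > 0" and "\<eta> > 0" and "\<beta> \<noteq> 0"
    and "\<bar>b\<bar> < min (\<sigma> * \<eta> / 2) (\<sigma>\<^sup>2 * (\<alpha> + 1) / (2 * (\<sigma> * \<eta>)))"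
  shows "gdp_obj \<sigma> \<alpha> \<eta> b 0 < gdp_obj \<sigma> \<alpha> \<eta> b \<beta>"
proof -
  define k A where "k = \<sigma> * \<eta>" and "A = \<sigma>\<^sup>2 * (\<alpha> + 1)"
  have "k > 0" "A > 0" "\<bar>\<beta>\<bar> > 0"
    using assms by (simp_all add: k_def A_def)
  then have pos: "\<bar>\<beta>\<bar>\<^sup>2 / 2 - \<bar>b\<bar> * \<bar>\<beta>\<bar> + A * (ln (k + \<bar>\<beta>\<bar>) - ln k) > 0"
    using assms(5) by (intro log_penalty_increment_pos) (simp_all add: k_def A_def)
  have "b * \<beta> \<le> \<bar>b\<bar> * \<bar>\<beta>\<bar>"
    by (metis abs_ge_self abs_mult)
  moreover have "gdp_obj \<sigma> \<alpha> \<eta> b \<beta> - gdp_obj \<sigma> \<alpha> \<eta> b 0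
      = \<beta>\<^sup>2 / 2 - b * \<beta> + A * (ln (k + \<bar>\<beta>\<bar>) - ln k)"
    unfolding gdp_obj_def gdp_pen_def A_def k_def
    by (simp add: algebra_simps power2_eq_square)
  ultimately show ?thesis using pos by simp
qed

lemma argmin_eq_singleton_if_strict_min:
  fixes f :: "'a \<Rightarrow> 'b::linorder"
  assumes "\<And>y. y \<noteq> x \<Longrightarrow> f x < f y"
  shows "{y. \<forall>z. f y \<le> f z} = {x}"
proof
  show "{x} \<subseteq> {y. \<forall>z. f y \<le> f z}"
  proof (clarsimp)
    fix z
    show "f x \<le> f z"
      using assms[of z] by (cases "z = x") auto
  qed
  show "{y. \<forall>z. f y \<le> f z} \<subseteq> {x}"
    using assms by (auto dest: leD)
qed

theorem proposition3:
  fixes \<sigma> \<alpha> \<eta> :: real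
  assumes "\<sigma> > 0" and "\<alpha> > 0" and "\<eta> > 0"
    and "\<eta> < 2 * sqrt (\<alpha> + 1)"
  shows "\<exists>c>0. \<forall>bhat::real. \<bar>bhat\<bar> < c \<longrightarrow> gdp_argmin \<sigma> \<alpha> \<eta> bhat = {0}"
proof (intro exI conjI allI impI)
  let ?c = "min (\<sigma> * \<eta> / 2) (\<sigma>\<^sup>2 * (\<alpha> + 1) / (2 * (\<sigma> * \<eta>)))"
  show "?c > 0" using assms by simp
  fix bhat :: real
  assume "\<bar>bhat\<bar> < ?c"
  then show "gdp_argmin \<sigma> \<alpha> \<eta> bhat = {0}"
    unfolding gdp_argmin_def
    using assms gdp_obj_zero_strict_min
    by (intro argmin_eq_singleton_if_strict_min) blast
qed

end
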